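(* $\mathbf{M}$ is a lower triangular square matrix with $M_{i,i}=1$ for all $i\in[0,2^{m}-1]$. Thus $\mathbf{M}$ is invertible over $\mathbb{F}_2$.
   Context: Let $m\ge1$, $N=2^m$, $\mathbf{R}_m=\mathbb{F}_2[x_0,\dots,x_{m-1}]/(x_0^2-x_0,\dots,x_{m-1}^2-x_{m-1})$, and $\operatorname{ev}(Q)$ the evaluation vector of $Q\in\mathbf{R}_m$ at all points of $\mathbb{F}_2^m$. Let $\boldsymbol{G}_N=\begin{pmatrix}1&0\\1&1\end{pmatrix}^{\otimes m}$; row $i$ of $\boldsymbol{G}_N$ is $\operatorname{ev}$ of the monomial $x_0^{b_0}\cdots x_{m-1}^{b_{m-1}}$ with $(b_0,\dots,b_{m-1})$ the binary expansion of $2^m-1-i$. Let $\mathbf{P}\in\mathbb{F}_2^{N\times N}$ be upper triangular with ones on the diagonal (defining an upper polynomial polar code spanned by selected rows of $\mathbf{P}\boldsymbol{G}_N$). For a monomial $h$, $\check{h}=x_0\cdots x_{m-1}/h$ is its multiplicative complement; $f\mid g$ means the set of variables of $f$ is contained in that of $g$; $\operatorname{terms}(Q)$ is the set of monomials appearing in $Q$. The matrix $\mathbf{M}$ is defined by $M_{i,j}=|\{g\in\operatorname{terms}(P_j)\mid \check{g}\mid \check{f}\}| \pmod 2$, where $\operatorname{ev}(P_j)$ is row $j$ of $\mathbf{P}\boldsymbol{G}_N$ and $\operatorname{ev}(f)$ is row $i$ of $\boldsymbol{G}_N$. *)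

theory Defs
  imports "Jordan_Normal_Form.Matrix" "HOL-Library.Z2"
begin

text \<open>F_2 is the type bit of HOL-Library.Z2. A monomial of R_m is identified
with its set of variables (a subset of {0..<m}); an element of R_m is its
coefficient function on monomials.\<close>

type_synonym monomial = "nat set"
type_synonym rpoly = "monomial \<Rightarrow> bit"

text \<open>Variable set of the monomial whose evaluation is row i of G_N:
binary expansion of 2^m - 1 - i.\<close>
definition row_monomial :: "nat \<Rightarrow> nat \<Rightarrow> monomial" where
  "row_monomial m i = {b. b < m \<and> bit (2 ^ m - 1 - i) b}"

definition terms :: "rpoly \<Rightarrow> monomial set" where
  "terms Q = {g. Q g \<noteq> 0}"

definition mcompl :: "nat \<Rightarrow> monomial \<Rightarrow> monomial" where
  "mcompl m h = {..<m} - h"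

definition mdvd :: "monomial \<Rightarrow> monomial \<Rightarrow> bool" where
  "mdvd f g \<longleftrightarrow> f \<subseteq> g"

text \<open>P_j: the polynomial whose evaluation is row j of P G_N, i.e.
  P_j = sum_k P(j,k) * (monomial of row k of G_N).\<close>
definition P_poly :: "nat \<Rightarrow> bit mat \<Rightarrow> nat \<Rightarrow> rpoly" where
  "P_poly m P j = (\<lambda>g. \<Sum>k<2^m. P $$ (j,k) * (if row_monomial m k = g then 1 else 0))"

definition M_mat :: "nat \<Rightarrow> bit mat \<Rightarrow> bit mat" where
  "M_mat m P = mat (2^m) (2^m) (\<lambda>(i,j).
     of_nat (card {g \<in> terms (P_poly m P j).
                    mdvd (mcompl m g) (mcompl m (row_monomial m i))}))"

end

theory Submission
  imports Defs "Jordan_Normal_Form.Determinant"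
begin

text \<open>Write f_k for the monomial of row k of G_N. By the complement formulation of divisibility,
M(i,j) counts the terms g of P_j whose variable set contains that of f_i. Every term of P_j is some
f_k with P(j,k) \<noteq> 0, so j \<le> k as P is upper triangular; and f_i | f_k means that the bits of
N-1-i are among those of N-1-k, which forces N-1-i \<le> N-1-k, i.e. k \<le> i. Hence M(i,j) = 0 for
i < j, while for i = j the only such term is f_i itself, with coefficient P(i,i) = 1. A lower
unitriangular matrix has determinant 1, so it is invertible via its adjugate.\<close>

lemma invertible_mat_if_det_dvd_one:
  fixes A :: "'a :: comm_ring_1 mat"
  assumes A: "A \<in> carrier_mat n n" and unit: "det A dvd 1"
  shows "invertible_mat A"
proof -
  from unit obtain u where u: "det A * u = 1"
    by (metis dvdE)
  define B where "B = u \<cdot>\<^sub>m adj_mat A"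
  have B: "B \<in> carrier_mat n n"
    using adj_mat(1)[OF A] by (simp add: B_def)
  have scaled_id: "u \<cdot>\<^sub>m (det A \<cdot>\<^sub>m 1\<^sub>m n) = 1\<^sub>m n"
    by (rule eq_matI) (auto simp: u mult.commute[of u])
  have "A * B = 1\<^sub>m n"
    unfolding B_def mult_smult_distrib[OF A adj_mat(1)[OF A]] adj_mat(2)[OF A] scaled_id ..
  moreover have "B * A = 1\<^sub>m n"
    unfolding B_def mult_smult_assoc_mat[OF adj_mat(1)[OF A] A] adj_mat(3)[OF A] scaled_id ..
  ultimately show ?thesis
    using A B unfolding invertible_mat_def inverts_mat_def by auto
qed

lemma det_lower_unitriangular:
  fixes A :: "'a :: comm_ring_1 mat"
  assumes A: "A \<in> carrier_mat n n"
    and lower: "\<And>i j. i < j \<Longrightarrow> j < n \<Longrightarrow> A $$ (i,j) = 0"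
    and diag: "\<And>i. i < n \<Longrightarrow> A $$ (i,i) = 1"
  shows "det A = 1"
proof -
  have "diag_mat A = replicate n 1"
    using A diag by (auto simp: diag_mat_def intro: nth_equalityI)
  then show ?thesis
    using det_lower_triangular[OF lower A] by simp
qed

lemma le_if_bits_subset:
  fixes a b :: nat
  assumes "\<And>n. bit a n \<Longrightarrow> bit b n"
  shows "a \<le> b"
proof -
  have "and a b = a"
    by (rule bit_eqI) (auto simp: bit_and_iff assms)
  \<comment> \<open>the bound \<open>AND_upper2\<close> is only available for \<open>int\<close>\<close>
  then have "int a = and (int a) (int b)"
    by (metis of_nat_and_eq)
  also have "\<dots> \<le> int b"
    by simp
  finally show ?thesis
    by simp
qed

lemma bit_less_power_imp_less:
  fixes x :: nat
  assumes "x < 2^m" and "bit x n"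
  shows "n < m"
proof (rule ccontr)
  assume "\<not> n < m"
  then have "x < 2^n"
    using assms(1) by (meson less_le_trans not_less one_le_numeral power_increasing)
  then show False
    using assms(2) by (simp add: bit_iff_odd)
qed

lemma row_monomial_eq_bits: "row_monomial m i = {b. bit (2^m - 1 - i) b}"
proof -
  have "b < m" if "bit (2^m - 1 - i) b" for b
    using that by (rule bit_less_power_imp_less[rotated]) (simp add: less_imp_diff_less)
  then show ?thesis
    unfolding row_monomial_def by blast
qed

lemma row_monomial_subset: "row_monomial m i \<subseteq> {..<m}"
  by (auto simp: row_monomial_def)

lemma le_if_row_monomial_subset:
  assumes "k < 2^m" and "row_monomial m i \<subseteq> row_monomial m k"
  shows "k \<le> i"
proof -
  have "2^m - 1 - i \<le> 2^m - 1 - k"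
    using assms(2) by (intro le_if_bits_subset) (auto simp: row_monomial_eq_bits)
  then show ?thesis
    using assms(1) by linarith
qed

lemma row_monomial_eq_iff:
  assumes "i < 2^m" and "k < 2^m"
  shows "row_monomial m i = row_monomial m k \<longleftrightarrow> i = k"
  using assms le_if_row_monomial_subset by (metis order_refl le_antisym)

lemma P_poly_row_monomial:
  assumes "i < 2^m"
  shows "P_poly m P j (row_monomial m i) = P $$ (j,i)"
proof -
  have "P_poly m P j (row_monomial m i) = (\<Sum>k<2^m. P $$ (j,k) * (if k = i then 1 else 0))"
    unfolding P_poly_def using assms by (intro sum.cong) (auto simp: row_monomial_eq_iff)
  also have "\<dots> = P $$ (j,i)"
    using assms by (simp add: if_distrib cong: if_cong)
  finally show ?thesis .
qed

lemma terms_P_poly: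
  assumes "g \<in> terms (P_poly m P j)"
  obtains k where "k < 2^m" "g = row_monomial m k" "P $$ (j,k) \<noteq> 0"
proof -
  have "P_poly m P j g \<noteq> 0"
    using assms by (simp add: terms_def)
  then obtain k where "k < 2^m" "P $$ (j,k) * (if row_monomial m k = g then 1 else 0) \<noteq> 0"
    unfolding P_poly_def by (meson lessThan_iff sum.not_neutral_contains_not_neutral)
  then show thesis
    using that by (auto split: if_splits)
qed

lemma mdvd_mcompl_iff:
  assumes "g \<subseteq> {..<m}" and "f \<subseteq> {..<m}"
  shows "mdvd (mcompl m g) (mcompl m f) \<longleftrightarrow> f \<subseteq> g"
  using assms unfolding mdvd_def mcompl_def by blast

lemma M_mat_entry:
  assumes "i < 2^m" and "j < 2^m"
  shows "M_mat m P $$ (i,j) = of_nat (card {g \<in> terms (P_poly m P j). row_monomial m i \<subseteq> g})"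
proof -
  have "mdvd (mcompl m g) (mcompl m (row_monomial m i)) \<longleftrightarrow> row_monomial m i \<subseteq> g"
    if "g \<in> terms (P_poly m P j)" for g
    using that by (elim terms_P_poly) (simp add: mdvd_mcompl_iff row_monomial_subset)
  then show ?thesis
    using assms unfolding M_mat_def by (auto intro!: arg_cong[where f = "\<lambda>S. of_nat (card S)"])
qed

lemma term_divisible_by_row_monomial:
  assumes "upper_triangular P" and "j < dim_row P"
    and "g \<in> terms (P_poly m P j)" and "row_monomial m i \<subseteq> g"
  obtains k where "g = row_monomial m k" and "j \<le> k" and "k \<le> i"
proof -
  obtain k where k: "k < 2^m" "g = row_monomial m k" "P $$ (j,k) \<noteq> 0"
    using assms(3) by (rule terms_P_poly)
  have "j \<le> k"
    using assms(1,2) k(3) unfolding upper_triangular_def by (meson not_le)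
  moreover have "k \<le> i"
    using k(1,2) assms(4) by (blast intro: le_if_row_monomial_subset)
  ultimately show thesis
    using that k(2) by blast
qed

lemma M_mat_upper_eq_0:
  assumes "upper_triangular P" and "j < dim_row P" and "i < j" and "j < 2^m"
  shows "M_mat m P $$ (i,j) = 0"
proof -
  have "M_mat m P $$ (i,j) = of_nat (card {g \<in> terms (P_poly m P j). row_monomial m i \<subseteq> g})"
    using assms(3,4) by (intro M_mat_entry) auto
  also have "{g \<in> terms (P_poly m P j). row_monomial m i \<subseteq> g} = {}"
    using assms(3) by (auto elim: term_divisible_by_row_monomial[OF assms(1,2)])
  finally show ?thesis
    by simp
qed

lemma M_mat_diag_eq_1:
  assumes "upper_triangular P" and "i < dim_row P" and "i < 2^m" and "P $$ (i,i) = 1"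
  shows "M_mat m P $$ (i,i) = 1"
proof -
  have "g = row_monomial m i"
    if "g \<in> terms (P_poly m P i)" and "row_monomial m i \<subseteq> g" for g
    using term_divisible_by_row_monomial[OF assms(1,2) that] by (metis le_antisym)
  moreover have "row_monomial m i \<in> terms (P_poly m P i)"
    using assms(3,4) by (simp add: terms_def P_poly_row_monomial)
  ultimately have "{g \<in> terms (P_poly m P i). row_monomial m i \<subseteq> g} = {row_monomial m i}"
    by blast
  then show ?thesis
    using assms(3) M_mat_entry[of i m i P] by simp
qed

theorem lemma7:
  fixes m :: nat and P :: "bit mat"
  assumes "m \<ge> 1"
    and "P \<in> carrier_mat (2^m) (2^m)"
    and "upper_triangular P"
    and "\<forall>i < 2^m. P $$ (i,i) = 1"
  shows "M_mat m P \<in> carrier_mat (2^m) (2^m)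
    \<and> (\<forall>i < 2^m. \<forall>j < 2^m. i < j \<longrightarrow> M_mat m P $$ (i,j) = 0)
    \<and> (\<forall>i < 2^m. M_mat m P $$ (i,i) = 1)
    \<and> invertible_mat (M_mat m P)"
proof -
  have carrier: "M_mat m P \<in> carrier_mat (2^m) (2^m)"
    unfolding M_mat_def by simp
  have lower: "\<forall>i < 2^m. \<forall>j < 2^m. i < j \<longrightarrow> M_mat m P $$ (i,j) = 0"
    using assms(2,3) by (auto intro: M_mat_upper_eq_0)
  have diag: "\<forall>i < 2^m. M_mat m P $$ (i,i) = 1"
    using assms(2-4) by (auto intro: M_mat_diag_eq_1)
  have "det (M_mat m P) = 1"
    using carrier lower diag by (intro det_lower_unitriangular) auto
  then have "invertible_mat (M_mat m P)"
    using carrier by (intro invertible_mat_if_det_dvd_one) auto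
  with carrier lower diag show ?thesis
    by blast
qed

end
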